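(* Let $R$ be a commutative ring, $I=(f_1,\dots,f_r)$, $\mathfrak a=(a_1,\dots,a_s)\subseteq I$, $\Phi=(c_{ij})$ an $r\times s$ matrix with $a_j=\sum_ic_{ij}f_i$, $\Gamma_\bullet$ as in the context, and $B_\bullet=B_\bullet(\mathbf f;R)$ the Koszul boundaries. Then $\langle\Gamma_\bullet\cdot B_\bullet\rangle_r=\mathfrak a$.
   Context: $K_\bullet(\mathbf f;R)$ is the Koszul DG algebra: exterior algebra over $R$ on $e_1,\dots,e_r$ with $\partial e_i=f_i$; $B_k=\partial(K_{k+1})$. $\zeta_j=\sum_ic_{ij}e_i$ and $\Gamma_\bullet$ is the $R$-subalgebra generated by $\zeta_1,\dots,\zeta_s$. $\langle\Gamma_\bullet\cdot B_\bullet\rangle_r$ is the $R$-span in $K_r$ of the products $\gamma\wedge b$ with $\gamma\in\Gamma_j$, $b\in B_{r-j}$, identified with an ideal of $R$ via $K_r=Re_1\wedge\cdots\wedge e_r\cong R$. *)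

theory Defs
  imports Main
begin

text \<open>Exterior algebra over a commutative ring R on generators e_0,...,e_{r-1}:
  an element is a coefficient function on finite index sets U (U stands for the
  basis monomial e_{u_1} wedge ... wedge e_{u_k} with u_1 < ... < u_k).\<close>

type_synonym 'a ext = "nat set \<Rightarrow> 'a"

definition ext_sign :: "nat set \<Rightarrow> nat set \<Rightarrow> 'a::comm_ring_1" where
  "ext_sign S T = (-1) ^ card {(i, j). i \<in> S \<and> j \<in> T \<and> j < i}"

text \<open>e_S wedge e_T = ext_sign S T e_{S \<union> T} for disjoint S, T, and 0 otherwise.\<close>
definition wedge :: "'a::comm_ring_1 ext \<Rightarrow> 'a ext \<Rightarrow> 'a ext" where
  "wedge x y = (\<lambda>U. \<Sum>S\<in>Pow U. ext_sign S (U - S) * x S * y (U - S))"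

definition ext_one :: "'a::comm_ring_1 ext" where
  "ext_one = (\<lambda>U. if U = {} then 1 else 0)"

definition ext_gen :: "nat \<Rightarrow> 'a::comm_ring_1 ext" where
  "ext_gen i = (\<lambda>U. if U = {i} then 1 else 0)"

definition ext_smult :: "'a::comm_ring_1 \<Rightarrow> 'a ext \<Rightarrow> 'a ext" where
  "ext_smult c x = (\<lambda>U. c * x U)"

definition koszul :: "nat \<Rightarrow> nat \<Rightarrow> 'a::comm_ring_1 ext set" where
  "koszul r k = {x. \<forall>U. x U \<noteq> 0 \<longrightarrow> U \<subseteq> {..<r} \<and> card U = k}"

text \<open>Koszul differential: d e_i = f_i, extended as a graded derivation, i.e.
  d(e_S) = sum_{i in S} (-1)^{#{j in S. j < i}} f_i e_{S - {i}}.\<close>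
definition koszul_d :: "nat \<Rightarrow> (nat \<Rightarrow> 'a::comm_ring_1) \<Rightarrow> 'a ext \<Rightarrow> 'a ext" where
  "koszul_d r f x = (\<lambda>U. \<Sum>i\<in>{..<r} - U. (-1) ^ card {j\<in>U. j < i} * f i * x (insert i U))"

definition koszul_B :: "nat \<Rightarrow> (nat \<Rightarrow> 'a::comm_ring_1) \<Rightarrow> nat \<Rightarrow> 'a ext set" where
  "koszul_B r f k = koszul_d r f ` koszul r (Suc k)"

definition zeta :: "nat \<Rightarrow> (nat \<Rightarrow> nat \<Rightarrow> 'a::comm_ring_1) \<Rightarrow> nat \<Rightarrow> 'a ext" where
  "zeta r c j = (\<lambda>U. \<Sum>i<r. c i j * ext_gen i U)"

inductive_set Gamma_alg :: "nat \<Rightarrow> nat \<Rightarrow> (nat \<Rightarrow> nat \<Rightarrow> 'a::comm_ring_1) \<Rightarrow> 'a ext set"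
  for r s c where
  one: "ext_one \<in> Gamma_alg r s c"
| gen: "j < s \<Longrightarrow> zeta r c j \<in> Gamma_alg r s c"
| add: "x \<in> Gamma_alg r s c \<Longrightarrow> y \<in> Gamma_alg r s c \<Longrightarrow> (\<lambda>U. x U + y U) \<in> Gamma_alg r s c"
| smult: "x \<in> Gamma_alg r s c \<Longrightarrow> ext_smult a x \<in> Gamma_alg r s c"
| mult: "x \<in> Gamma_alg r s c \<Longrightarrow> y \<in> Gamma_alg r s c \<Longrightarrow> wedge x y \<in> Gamma_alg r s c"

definition Gamma :: "nat \<Rightarrow> nat \<Rightarrow> (nat \<Rightarrow> nat \<Rightarrow> 'a::comm_ring_1) \<Rightarrow> nat \<Rightarrow> 'a ext set" where
  "Gamma r s c j = Gamma_alg r s c \<inter> koszul r j"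

definition ext_span :: "'a::comm_ring_1 ext set \<Rightarrow> 'a ext set" where
  "ext_span S = {(\<lambda>U. \<Sum>i<n. a i * g i U) | (n::nat) (a::nat \<Rightarrow> 'a) g. \<forall>i<n. g i \<in> S}"

definition ideal_gen :: "'a::comm_ring_1 set \<Rightarrow> 'a set" where
  "ideal_gen S = {(\<Sum>i<n. a i * g i) | (n::nat) (a::nat \<Rightarrow> 'a) g. \<forall>i<n. g i \<in> S}"

text \<open>The R-span in K_r of the products gamma wedge b with gamma in Gamma_j, b in B_{r-j},
  identified with an ideal of R via K_r = R e_0 wedge ... wedge e_{r-1}.\<close>
definition GammaB_top :: "nat \<Rightarrow> nat \<Rightarrow> (nat \<Rightarrow> 'a::comm_ring_1) \<Rightarrow> (nat \<Rightarrow> nat \<Rightarrow> 'a) \<Rightarrow> 'a set" where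
  "GammaB_top r s f c =
     (\<lambda>x. x {..<r}) ` ext_span {wedge g b | g b j. j \<le> r \<and> g \<in> Gamma r s c j \<and> b \<in> koszul_B r f (r - j)}"

end

theory Submission
  imports Defs "HOL.Modules"
begin

text \<open>
  The Koszul differential d is a graded derivation of the exterior algebra
  (\<open>koszul_d_wedge\<close>) with d \<zeta>_j = a_j, so d maps \<Gamma> into \<aa>K.
  Since K_(r+1) = 0, the Leibniz rule in top degree gives
  0 = d\<gamma> \<and> x + (-1)^j \<gamma> \<and> dx for \<gamma> \<in> \<Gamma>_j, hence \<gamma> \<and> dx \<in> \<aa>K_r.
  Conversely \<zeta>_j \<in> \<Gamma>_1, and for the top monomial e = e_1 \<and> ... \<and> e_r the same
  identity reads \<zeta>_j \<and> de = d\<zeta>_j \<and> e = a_j e.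
\<close>

definition inversions :: "nat set \<Rightarrow> nat set \<Rightarrow> (nat \<times> nat) set" where
  "inversions S T = {(i, j). i \<in> S \<and> j \<in> T \<and> j < i}"

lemma ext_sign_inversions: "ext_sign S T = (-1) ^ card (inversions S T)"
  by (simp add: ext_sign_def inversions_def)

lemma finite_inversions: "finite S \<Longrightarrow> finite T \<Longrightarrow> finite (inversions S T)"
  by (rule finite_subset[of _ "S \<times> T"]) (auto simp: inversions_def)

lemma ext_sign_Un_left:
  assumes "finite A" "finite B" "finite C" "A \<inter> B = {}"
  shows "ext_sign (A \<union> B) C = ext_sign A C * ext_sign B C"
proof -
  have "inversions (A \<union> B) C = inversions A C \<union> inversions B C"
    by (auto simp: inversions_def)
  moreover have "inversions A C \<inter> inversions B C = {}"
    using assms(4) by (auto simp: inversions_def)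
  ultimately show ?thesis
    using assms by (simp add: ext_sign_inversions finite_inversions card_Un_disjoint power_add)
qed

lemma ext_sign_Un_right:
  assumes "finite A" "finite B" "finite C" "B \<inter> C = {}"
  shows "ext_sign A (B \<union> C) = ext_sign A B * ext_sign A C"
proof -
  have "inversions A (B \<union> C) = inversions A B \<union> inversions A C"
    by (auto simp: inversions_def)
  moreover have "inversions A B \<inter> inversions A C = {}"
    using assms(4) by (auto simp: inversions_def)
  ultimately show ?thesis
    using assms by (simp add: ext_sign_inversions finite_inversions card_Un_disjoint power_add)
qed

lemma ext_sign_singleton_left: "ext_sign {i} T = (-1) ^ card {j \<in> T. j < i}"
proof -
  have "inversions {i} T = Pair i ` {j \<in> T. j < i}"
    by (auto simp: inversions_def)
  then show ?thesis
    by (simp add: ext_sign_inversions card_image inj_on_def)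
qed

lemma ext_sign_singleton_right: "ext_sign S {i} = (-1) ^ card {j \<in> S. i < j}"
proof -
  have "inversions S {i} = (\<lambda>j. (j, i)) ` {j \<in> S. i < j}"
    by (auto simp: inversions_def)
  then show ?thesis
    by (simp add: ext_sign_inversions card_image inj_on_def)
qed

lemma ext_sign_singleton_swap:
  assumes "finite S" "i \<notin> S"
  shows "ext_sign {i} S * ext_sign S {i} = (-1) ^ card S"
proof -
  have "S = {j \<in> S. j < i} \<union> {j \<in> S. i < j}"
    using assms(2) by auto (metis linorder_neqE_nat)
  then have "card S = card ({j \<in> S. j < i} \<union> {j \<in> S. i < j})"
    by simp
  also have "\<dots> = card {j \<in> S. j < i} + card {j \<in> S. i < j}"
    using assms(1) by (intro card_Un_disjoint) auto
  finally show ?thesis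
    by (simp add: ext_sign_singleton_left ext_sign_singleton_right power_add)
qed

lemma ext_sign_mult_self [simp]: "ext_sign S T * ext_sign S T = 1"
  by (simp add: ext_sign_def flip: power_mult_distrib)

lemma ext_sign_empty_left [simp]: "ext_sign {} T = 1"
  by (simp add: ext_sign_def)

lemma koszul_d_ext_sign:
  "koszul_d r f x U = (\<Sum>i\<in>{..<r} - U. ext_sign {i} U * f i * x (insert i U))"
  by (simp add: koszul_d_def ext_sign_singleton_left)

definition grade_involution :: "'a::comm_ring_1 ext \<Rightarrow> 'a ext" where
  "grade_involution x = (\<lambda>U. (-1) ^ card U * x U)"

lemma wedge_infinite: "infinite U \<Longrightarrow> wedge x y U = 0"
  by (simp add: wedge_def)

lemma wedge_insert:
  assumes "finite U" "i \<notin> U"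
  shows "wedge x y (insert i U) =
    (\<Sum>S\<in>Pow U. ext_sign S (insert i (U - S)) * x S * y (insert i (U - S))) +
    (\<Sum>S\<in>Pow U. ext_sign (insert i S) (U - S) * x (insert i S) * y (U - S))"
proof -
  have "Pow U \<inter> insert i ` Pow U = {}" and "inj_on (insert i) (Pow U)"
    using assms by (auto simp: inj_on_def)
  moreover have "insert i U - S = insert i (U - S)" and "insert i U - insert i S = U - S"
    if "S \<in> Pow U" for S
    using that assms by auto
  ultimately show ?thesis
    using assms by (simp add: wedge_def Pow_insert sum.union_disjoint sum.reindex)
qed

lemma leibniz_sign_left:
  assumes "finite U" "S \<subseteq> U" "i \<notin> U"
  shows "ext_sign {i} U * ext_sign (insert i S) (U - S) = ext_sign S (U - S) * (ext_sign {i} S :: 'a::comm_ring_1)"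
proof -
  have fin: "finite S" "finite (U - S)"
    using assms finite_subset by auto
  have "ext_sign {i} U = (ext_sign {i} S :: 'a) * ext_sign {i} (U - S)"
    using ext_sign_Un_right[of "{i}" S "U - S"] fin assms(2) by (simp add: Un_absorb1)
  moreover have "ext_sign (insert i S) (U - S) = ext_sign {i} (U - S) * (ext_sign S (U - S) :: 'a)"
    using ext_sign_Un_left[of "{i}" S "U - S"] fin assms by auto
  ultimately show ?thesis
    by (simp add: ac_simps)
qed

lemma leibniz_sign_right:
  assumes "finite U" "S \<subseteq> U" "i \<notin> U"
  shows "ext_sign {i} U * ext_sign S (insert i (U - S))
    = ext_sign S (U - S) * (-1) ^ card S * (ext_sign {i} (U - S) :: 'a::comm_ring_1)"
proof -
  have fin: "finite S" "finite (U - S)"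
    using assms finite_subset by auto
  have "ext_sign {i} U = (ext_sign {i} S :: 'a) * ext_sign {i} (U - S)"
    using ext_sign_Un_right[of "{i}" S "U - S"] fin assms(2) by (simp add: Un_absorb1)
  moreover have "ext_sign S (insert i (U - S)) = ext_sign S {i} * (ext_sign S (U - S) :: 'a)"
    using ext_sign_Un_right[of S "{i}" "U - S"] fin assms by auto
  ultimately have "ext_sign {i} U * ext_sign S (insert i (U - S))
    = (ext_sign {i} S * ext_sign S {i}) * ext_sign S (U - S) * (ext_sign {i} (U - S) :: 'a)"
    by (simp add: ac_simps)
  also have "ext_sign {i} S * ext_sign S {i} = ((-1) ^ card S :: 'a)"
    using fin assms by (intro ext_sign_singleton_swap) auto
  finally show ?thesis
    by (simp add: ac_simps)
qed

lemma leibniz_sign_cancel: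
  assumes "finite U" "S \<subseteq> U" "i \<in> U" "i \<notin> S"
  shows "ext_sign (insert i S) (U - insert i S) * (-1) ^ card (insert i S) * ext_sign {i} (U - insert i S)
    = - (ext_sign S (U - S) * ext_sign {i} S :: 'a::comm_ring_1)"
proof -
  define V where "V = U - insert i S"
  have fin: "finite S" "finite V"
    using assms(1,2) finite_subset by (auto simp: V_def)
  have "U - S = {i} \<union> V" "{i} \<inter> V = {}"
    using assms by (auto simp: V_def)
  then have sign_U_S: "ext_sign S (U - S) = ext_sign S {i} * (ext_sign S V :: 'a)"
    using ext_sign_Un_right[of S "{i}" V] fin by simp
  have sign_insert_V: "ext_sign (insert i S) V = ext_sign {i} V * (ext_sign S V :: 'a)"
    using ext_sign_Un_left[of "{i}" S V] fin assms by auto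
  have sign_card_insert: "(-1) ^ card (insert i S) = - (ext_sign {i} S * ext_sign S {i} :: 'a)"
    using fin assms by (simp add: ext_sign_singleton_swap)
  have "ext_sign (insert i S) V * (-1) ^ card (insert i S) * ext_sign {i} V
    = - ((ext_sign {i} V * ext_sign {i} V) * ext_sign S {i} * ext_sign S V * (ext_sign {i} S :: 'a))"
    unfolding sign_insert_V sign_card_insert by (simp add: ac_simps)
  then show ?thesis
    unfolding V_def[symmetric] sign_U_S by (simp add: ac_simps)
qed

text \<open>
  The summands of (dx \<and> y)(U) and of (\<sigma>x \<and> dy)(U), \<sigma> the grade involution, indexed by
  the part S \<subseteq> U carried by x and the generator e_i removed by d.
\<close>

definition leibniz_left_term ::
  "(nat \<Rightarrow> 'a::comm_ring_1) \<Rightarrow> 'a ext \<Rightarrow> 'a ext \<Rightarrow> nat set \<Rightarrow> nat \<Rightarrow> nat set \<Rightarrow> 'a" where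
  "leibniz_left_term f x y U i S =
     ext_sign S (U - S) * ext_sign {i} S * f i * x (insert i S) * y (U - S)"

definition leibniz_right_term ::
  "(nat \<Rightarrow> 'a::comm_ring_1) \<Rightarrow> 'a ext \<Rightarrow> 'a ext \<Rightarrow> nat set \<Rightarrow> nat \<Rightarrow> nat set \<Rightarrow> 'a" where
  "leibniz_right_term f x y U i S =
     ext_sign S (U - S) * (-1) ^ card S * ext_sign {i} (U - S) * f i * x S * y (insert i (U - S))"

lemma wedge_koszul_d_left_expand:
  "wedge (koszul_d r f x) y U = (\<Sum>S\<in>Pow U. \<Sum>i\<in>{..<r} - S. leibniz_left_term f x y U i S)"
  by (simp add: wedge_def koszul_d_ext_sign leibniz_left_term_def sum_distrib_left sum_distrib_right ac_simps)

lemma wedge_grade_involution_koszul_d_expand: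
  "wedge (grade_involution x) (koszul_d r f y) U
    = (\<Sum>S\<in>Pow U. \<Sum>i\<in>{..<r} - (U - S). leibniz_right_term f x y U i S)"
  by (simp add: wedge_def grade_involution_def koszul_d_ext_sign leibniz_right_term_def
      sum_distrib_left ac_simps)

lemma koszul_d_wedge_expand:
  assumes "finite U"
  shows "koszul_d r f (wedge x y) U
    = (\<Sum>i\<in>{..<r} - U. \<Sum>S\<in>Pow U. leibniz_left_term f x y U i S + leibniz_right_term f x y U i S)"
  unfolding koszul_d_ext_sign
proof (rule sum.cong)
  fix i assume "i \<in> {..<r} - U"
  then have i: "i \<notin> U" by simp
  have right: "ext_sign {i} U * f i * (ext_sign S (insert i (U - S)) * x S * y (insert i (U - S)))
    = leibniz_right_term f x y U i S" if "S \<in> Pow U" for S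
  proof -
    have "ext_sign {i} U * f i * (ext_sign S (insert i (U - S)) * x S * y (insert i (U - S)))
      = (ext_sign {i} U * ext_sign S (insert i (U - S))) * (f i * x S * y (insert i (U - S)))"
      by (simp add: ac_simps)
    also have "\<dots> = leibniz_right_term f x y U i S"
      using that assms i by (simp add: leibniz_sign_right leibniz_right_term_def ac_simps)
    finally show ?thesis .
  qed
  have left: "ext_sign {i} U * f i * (ext_sign (insert i S) (U - S) * x (insert i S) * y (U - S))
    = leibniz_left_term f x y U i S" if "S \<in> Pow U" for S
  proof -
    have "ext_sign {i} U * f i * (ext_sign (insert i S) (U - S) * x (insert i S) * y (U - S))
      = (ext_sign {i} U * ext_sign (insert i S) (U - S)) * (f i * x (insert i S) * y (U - S))"
      by (simp add: ac_simps)
    also have "\<dots> = leibniz_left_term f x y U i S"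
      using that assms i by (simp add: leibniz_sign_left leibniz_left_term_def ac_simps)
    finally show ?thesis .
  qed
  show "ext_sign {i} U * f i * wedge x y (insert i U)
    = (\<Sum>S\<in>Pow U. leibniz_left_term f x y U i S + leibniz_right_term f x y U i S)"
    unfolding wedge_insert[OF assms i] distrib_left sum_distrib_left sum.distrib
    using left right by (simp add: add.commute)
qed simp

text \<open>The summands with i \<in> U, absent from d(x \<and> y)(U), cancel in pairs S, insert i S.\<close>

lemma leibniz_terms_cancel:
  assumes "finite U" "i \<in> U"
  shows "(\<Sum>S\<in>Pow U. (if i \<notin> S then leibniz_left_term f x y U i S else 0)
                    + (if i \<in> S then leibniz_right_term f x y U i S else 0)) = 0"
proof -
  define V where "V = U - {i}"
  have "i \<notin> V" "finite V"
    using assms by (auto simp: V_def)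
  have Pow_U: "Pow U = Pow V \<union> insert i ` Pow V"
    using Pow_insert[of i V] assms(2) by (simp add: V_def insert_absorb)
  have "Pow V \<inter> insert i ` Pow V = {}" "inj_on (insert i) (Pow V)"
    using \<open>i \<notin> V\<close> by (auto simp: inj_on_def)
  moreover have "leibniz_right_term f x y U i (insert i S) = - leibniz_left_term f x y U i S"
    if "S \<in> Pow V" for S
  proof -
    have S: "S \<subseteq> U" "i \<notin> S"
      using that by (auto simp: V_def)
    moreover have "insert i (U - insert i S) = U - S"
      using S assms(2) by auto
    ultimately show ?thesis
      unfolding leibniz_right_term_def leibniz_sign_cancel[OF assms(1) S(1) assms(2) S(2)]
      by (simp add: leibniz_left_term_def)
  qed
  ultimately show ?thesis
    using \<open>finite V\<close> \<open>i \<notin> V\<close> unfolding Pow_U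
    by (auto simp: sum.union_disjoint sum.reindex sum.distrib[symmetric] intro!: sum.neutral)
qed

lemma sum_diff_subset_split:
  assumes "finite A" "V \<subseteq> U"
  shows "(\<Sum>i\<in>A - V. h i) = (\<Sum>i\<in>A - U. h i) + (\<Sum>i\<in>A \<inter> U. if i \<notin> V then h i else 0)"
proof -
  have "A - V = (A - U) \<union> {i \<in> A \<inter> U. i \<notin> V}"
    using assms(2) by auto
  then have "(\<Sum>i\<in>A - V. h i) = (\<Sum>i\<in>A - U. h i) + (\<Sum>i\<in>{i \<in> A \<inter> U. i \<notin> V}. h i)"
    by (simp only:) (rule sum.union_disjoint, use assms(1) in auto)
  also have "\<dots> = (\<Sum>i\<in>A - U. h i) + (\<Sum>i\<in>A \<inter> U. if i \<notin> V then h i else 0)"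
    by (subst sum.inter_filter) (use assms(1) in auto)
  finally show ?thesis .
qed

lemma koszul_d_wedge:
  "koszul_d r f (wedge x y) U
    = wedge (koszul_d r f x) y U + wedge (grade_involution x) (koszul_d r f y) U"
proof (cases "finite U")
  case False
  then show ?thesis
    by (simp add: koszul_d_ext_sign wedge_infinite)
next
  case True
  define A where "A = {..<r}"
  let ?L = "leibniz_left_term f x y U" and ?R = "leibniz_right_term f x y U"
  have "(\<Sum>i\<in>A - S. ?L i S) + (\<Sum>i\<in>A - (U - S). ?R i S)
      = (\<Sum>i\<in>A - U. ?L i S + ?R i S)
      + (\<Sum>i\<in>A \<inter> U. (if i \<notin> S then ?L i S else 0) + (if i \<in> S then ?R i S else 0))"
    if "S \<in> Pow U" for S
  proof -
    have "(\<Sum>i\<in>A \<inter> U. if i \<notin> U - S then ?R i S else 0) = (\<Sum>i\<in>A \<inter> U. if i \<in> S then ?R i S else 0)"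
      by (rule sum.cong) auto
    then show ?thesis
      using that sum_diff_subset_split[of A S U "\<lambda>i. ?L i S"]
        sum_diff_subset_split[of A "U - S" U "\<lambda>i. ?R i S"]
      by (simp add: A_def sum.distrib)
  qed
  then have "wedge (koszul_d r f x) y U + wedge (grade_involution x) (koszul_d r f y) U
      = (\<Sum>S\<in>Pow U. \<Sum>i\<in>A - U. ?L i S + ?R i S)
      + (\<Sum>S\<in>Pow U. \<Sum>i\<in>A \<inter> U. (if i \<notin> S then ?L i S else 0) + (if i \<in> S then ?R i S else 0))"
    (is "_ = ?main + ?cross")
    unfolding wedge_koszul_d_left_expand wedge_grade_involution_koszul_d_expand A_def[symmetric]
    by (simp add: sum.distrib[symmetric])
  moreover have "?main = koszul_d r f (wedge x y) U"
    unfolding koszul_d_wedge_expand[OF True] A_def by (rule sum.swap)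
  moreover have "?cross = 0"
    by (subst sum.swap) (simp add: leibniz_terms_cancel True)
  ultimately show ?thesis
    by simp
qed

interpretation ring_module: module "(*) :: 'a::comm_ring_1 \<Rightarrow> 'a \<Rightarrow> 'a"
  by unfold_locales (simp_all add: algebra_simps)

text \<open>For \<open>(*)\<close> this rule reassociates products and makes \<open>ac_simps\<close> loop.\<close>
declare ring_module.scale_scale [simp del]

lemma ideal_genI: "(\<And>i. i < (n::nat) \<Longrightarrow> g i \<in> G) \<Longrightarrow> (\<Sum>i<n. a i * g i) \<in> ideal_gen G"
  unfolding ideal_gen_def by blast

lemma ideal_gen_eq_span: "ideal_gen G = ring_module.span G"
proof
  show "ideal_gen G \<subseteq> ring_module.span G"
  proof
    fix z assume "z \<in> ideal_gen G"
    then obtain n :: nat and a g where z: "z = (\<Sum>i<n. a i * g i)" and g: "\<And>i. i < n \<Longrightarrow> g i \<in> G"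
      unfolding ideal_gen_def by blast
    show "z \<in> ring_module.span G"
      unfolding z
    proof (rule ring_module.span_sum)
      fix i assume "i \<in> {..<n}"
      then show "a i * g i \<in> ring_module.span G"
        using g by (intro ring_module.span_scale ring_module.span_base) simp
    qed
  qed
  show "ring_module.span G \<subseteq> ideal_gen G"
  proof
    fix z assume "z \<in> ring_module.span G"
    then show "z \<in> ideal_gen G"
    proof (induction rule: ring_module.span_induct_alt)
      case base
      show ?case
        using ideal_genI[of 0 _ G] by simp
    next
      case (step c g z)
      then obtain n :: nat and a h where z: "z = (\<Sum>i<n. a i * h i)" and h: "\<And>i. i < n \<Longrightarrow> h i \<in> G"
        unfolding ideal_gen_def by blast
      have "c * g + z = (\<Sum>i<Suc n. (a(n := c)) i * (h(n := g)) i)"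
        by (simp add: z add.commute)
      also have "\<dots> \<in> ideal_gen G"
        using h step(1) by (intro ideal_genI) (auto simp: less_Suc_eq)
      finally show ?case .
    qed
  qed
qed

lemma wedge_in_ideal_left:
  assumes "range x \<subseteq> ideal_gen G"
  shows "wedge x y U \<in> ideal_gen G"
  unfolding wedge_def ideal_gen_eq_span
proof (rule ring_module.span_sum)
  fix S
  have "x S \<in> ring_module.span G"
    using assms by (auto simp: ideal_gen_eq_span)
  from ring_module.span_scale[OF this, of "ext_sign S (U - S) * y (U - S)"]
  show "ext_sign S (U - S) * x S * y (U - S) \<in> ring_module.span G"
    by (simp add: ac_simps)
qed

lemma wedge_in_ideal_right:
  assumes "range y \<subseteq> ideal_gen G"
  shows "wedge x y U \<in> ideal_gen G"
  unfolding wedge_def ideal_gen_eq_span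
proof (rule ring_module.span_sum)
  fix S
  have "y (U - S) \<in> ring_module.span G"
    using assms by (auto simp: ideal_gen_eq_span)
  then show "ext_sign S (U - S) * x S * y (U - S) \<in> ring_module.span G"
    by (rule ring_module.span_scale)
qed

lemma koszul_d_add: "koszul_d r f (\<lambda>U. x U + y U) = (\<lambda>U. koszul_d r f x U + koszul_d r f y U)"
  by (simp add: koszul_d_def fun_eq_iff sum.distrib algebra_simps)

lemma koszul_d_smult: "koszul_d r f (ext_smult c x) = ext_smult c (koszul_d r f x)"
  by (simp add: koszul_d_def ext_smult_def fun_eq_iff sum_distrib_left ac_simps)

lemma koszul_d_ext_one: "koszul_d r f ext_one = (\<lambda>U. 0)"
  by (simp add: koszul_d_def ext_one_def fun_eq_iff)

lemma zeta_singleton: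
  assumes "l < r"
  shows "zeta r c j {l} = c l j"
proof -
  have "zeta r c j {l} = (\<Sum>i<r. if i = l then c i j else 0)"
    unfolding zeta_def ext_gen_def by (intro sum.cong) auto
  then show ?thesis
    using assms by simp
qed

lemma zeta_nonzero_singleton:
  assumes "zeta r c j V \<noteq> 0"
  shows "\<exists>l<r. V = {l}"
proof (rule ccontr)
  assume "\<not> (\<exists>l<r. V = {l})"
  then have "zeta r c j V = 0"
    by (simp add: zeta_def ext_gen_def)
  with assms show False
    by contradiction
qed

lemma koszul_d_zeta:
  "koszul_d r f (zeta r c j) U = (if U = {} then \<Sum>i<r. c i j * f i else 0)"
proof (cases "U = {}")
  case True
  then show ?thesis
    by (simp add: koszul_d_def zeta_singleton ac_simps)
next
  case False
  then have "zeta r c j (insert i U) = 0" if "i \<notin> U" for i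
    using that zeta_nonzero_singleton[of r c j "insert i U"] by auto
  with False show ?thesis
    by (simp add: koszul_d_def)
qed

lemma koszul_d_Gamma_alg_in_ideal:
  assumes "\<forall>j<s. a j = (\<Sum>i<r. c i j * f i)" and "g \<in> Gamma_alg r s c"
  shows "range (koszul_d r f g) \<subseteq> ideal_gen (a ` {..<s})"
  using assms(2)
proof induction
  case one
  then show ?case
    by (simp add: koszul_d_ext_one ideal_gen_eq_span ring_module.span_zero)
next
  case (gen j)
  then show ?case
    using assms(1) by (auto simp: koszul_d_zeta ideal_gen_eq_span ring_module.span_zero intro: ring_module.span_base)
next
  case (add x y)
  then show ?case
    by (auto simp: koszul_d_add ideal_gen_eq_span intro: ring_module.span_add)
next
  case (smult x b)
  then show ?case
    unfolding koszul_d_smult by (auto simp: ext_smult_def ideal_gen_eq_span intro: ring_module.span_scale)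
next
  case (mult x y)
  have "koszul_d r f (wedge x y) U \<in> ideal_gen (a ` {..<s})" for U
    using wedge_in_ideal_left[OF mult.IH(1)] wedge_in_ideal_right[OF mult.IH(2)]
    unfolding koszul_d_wedge ideal_gen_eq_span by (rule ring_module.span_add)
  then show ?case
    by auto
qed

lemma grade_involution_homogeneous:
  assumes "x \<in> koszul r j"
  shows "grade_involution x = ext_smult ((-1) ^ j) x"
proof
  fix U
  show "grade_involution x U = ext_smult ((-1) ^ j) x U"
    using assms by (cases "x U = 0") (auto simp: grade_involution_def ext_smult_def koszul_def)
qed

lemma wedge_smult_left: "wedge (ext_smult c x) y U = c * wedge x y U"
  by (simp add: wedge_def ext_smult_def sum_distrib_left ac_simps)

lemma koszul_d_top: "koszul_d r f x {..<r} = 0"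
  by (simp add: koszul_d_def)

lemma wedge_koszul_d_top:
  assumes "g \<in> koszul r j"
  shows "wedge g (koszul_d r f x) {..<r} = - ((-1) ^ j * wedge (koszul_d r f g) x {..<r})"
proof -
  have "wedge (koszul_d r f g) x {..<r} + (-1) ^ j * wedge g (koszul_d r f x) {..<r} = 0"
    (is "?v + (-1) ^ j * ?w = 0")
    using koszul_d_wedge[of r f g x "{..<r}"]
    by (simp add: koszul_d_top grade_involution_homogeneous[OF assms] wedge_smult_left)
  then have "(-1) ^ j * (?v + (-1) ^ j * ?w) = 0"
    by simp
  then have "(-1) ^ j * ?v + ?w = 0"
    by (simp add: distrib_left)
  then show ?thesis
    by (simp add: eq_neg_iff_add_eq_0 add.commute)
qed

definition ext_top :: "nat \<Rightarrow> 'a::comm_ring_1 ext" where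
  "ext_top r = (\<lambda>U. if U = {..<r} then 1 else 0)"

lemma ext_top_in_koszul: "ext_top r \<in> koszul r r"
  by (simp add: ext_top_def koszul_def)

lemma wedge_ext_top: "wedge y (ext_top r) {..<r} = y {}"
proof -
  have "wedge y (ext_top r) {..<r} = (\<Sum>S\<in>Pow {..<r}. if S = {} then y S else 0)"
    unfolding wedge_def ext_top_def by (intro sum.cong refl) auto
  then show ?thesis
    by simp
qed

lemma zeta_in_Gamma:
  assumes "j < s"
  shows "zeta r c j \<in> Gamma r s c 1"
proof -
  have "zeta r c j \<in> koszul r 1"
    unfolding koszul_def
  proof (intro CollectI allI impI)
    fix U assume "zeta r c j U \<noteq> 0"
    then obtain l where "l < r" "U = {l}"
      using zeta_nonzero_singleton by blast
    then show "U \<subseteq> {..<r} \<and> card U = 1"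
      by simp
  qed
  moreover have "zeta r c j \<in> Gamma_alg r s c"
    using assms by (rule Gamma_alg.gen)
  ultimately show ?thesis
    by (simp add: Gamma_def)
qed

lemma koszul_d_ext_top_in_koszul_B:
  assumes "0 < r"
  shows "koszul_d r f (ext_top r) \<in> koszul_B r f (r - 1)"
proof -
  have "Suc (r - 1) = r"
    using assms by simp
  then show ?thesis
    unfolding koszul_B_def by (simp add: ext_top_in_koszul)
qed

lemma ext_spanI: "(\<And>i. i < (n::nat) \<Longrightarrow> g i \<in> S) \<Longrightarrow> (\<lambda>U. \<Sum>i<n. a i * g i U) \<in> ext_span S"
  unfolding ext_span_def by blast

lemma image_eval_ext_span:
  fixes S :: "'a::comm_ring_1 ext set"
  shows "(\<lambda>x. x U) ` ext_span S = ideal_gen ((\<lambda>x. x U) ` S)"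
proof
  show "(\<lambda>x. x U) ` ext_span S \<subseteq> ideal_gen ((\<lambda>x. x U) ` S)"
  proof (rule image_subsetI)
    fix X assume "X \<in> ext_span S"
    then obtain n :: nat and a :: "nat \<Rightarrow> 'a" and g :: "nat \<Rightarrow> 'a ext"
      where X: "X = (\<lambda>U. \<Sum>i<n. a i * g i U)" and g: "\<forall>i<n. g i \<in> S"
      unfolding ext_span_def by blast
    have "(\<Sum>i<n. a i * (\<lambda>x. x U) (g i)) \<in> ideal_gen ((\<lambda>x. x U) ` S)"
      using g by (intro ideal_genI) simp
    then show "X U \<in> ideal_gen ((\<lambda>x. x U) ` S)"
      by (simp add: X)
  qed
  show "ideal_gen ((\<lambda>x. x U) ` S) \<subseteq> (\<lambda>x. x U) ` ext_span S"
  proof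
    fix z assume "z \<in> ideal_gen ((\<lambda>x. x U) ` S)"
    then obtain n :: nat and a h where z: "z = (\<Sum>i<n. a i * h i)"
      and h: "\<And>i. i < n \<Longrightarrow> h i \<in> (\<lambda>x. x U) ` S"
      unfolding ideal_gen_def by blast
    have "\<exists>g. \<forall>i\<in>{..<n}. g i \<in> S \<and> h i = g i U"
      by (rule bchoice) (use h in blast)
    then obtain g where g: "\<forall>i\<in>{..<n}. g i \<in> S \<and> h i = g i U"
      by blast
    have "(\<lambda>U. \<Sum>i<n. a i * g i U) \<in> ext_span S"
      using g by (intro ext_spanI) simp
    moreover have "z = (\<Sum>i<n. a i * g i U)"
      using g by (simp add: z)
    ultimately show "z \<in> (\<lambda>x. x U) ` ext_span S"
      by (auto intro: image_eqI[where x = "\<lambda>U. \<Sum>i<n. a i * g i U"])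
  qed
qed

lemma wedge_Gamma_boundary_top_in_ideal:
  assumes "\<forall>j<s. a j = (\<Sum>i<r. c i j * f i)" "g \<in> Gamma r s c j" "b \<in> koszul_B r f k"
  shows "wedge g b {..<r} \<in> ideal_gen (a ` {..<s})"
proof -
  obtain x where b: "b = koszul_d r f x"
    using assms(3) unfolding koszul_B_def by blast
  have "g \<in> Gamma_alg r s c" "g \<in> koszul r j"
    using assms(2) by (auto simp: Gamma_def)
  then have "wedge (koszul_d r f g) x {..<r} \<in> ideal_gen (a ` {..<s})"
    using koszul_d_Gamma_alg_in_ideal[OF assms(1)] by (intro wedge_in_ideal_left) blast
  then show ?thesis
    unfolding b wedge_koszul_d_top[OF \<open>g \<in> koszul r j\<close>] ideal_gen_eq_span
    by (intro ring_module.span_neg ring_module.span_scale)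
qed

lemma wedge_zeta_koszul_d_ext_top:
  assumes "\<forall>j<s. a j = (\<Sum>i<r. c i j * f i)" "k < s"
  shows "wedge (zeta r c k) (koszul_d r f (ext_top r)) {..<r} = a k"
proof -
  have "zeta r c k \<in> koszul r 1"
    using zeta_in_Gamma[OF assms(2), of r c] unfolding Gamma_def by blast
  then show ?thesis
    using assms by (simp add: wedge_koszul_d_top wedge_ext_top koszul_d_zeta)
qed

theorem lemma4p21:
  fixes f :: "nat \<Rightarrow> 'a::comm_ring_1" and a :: "nat \<Rightarrow> 'a"
    and c :: "nat \<Rightarrow> nat \<Rightarrow> 'a" and r s :: nat
  assumes "\<forall>j<s. a j = (\<Sum>i<r. c i j * f i)"
  shows "GammaB_top r s f c = ideal_gen (a ` {..<s})"
proof -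
  let ?P = "{wedge g b | g b j. j \<le> r \<and> g \<in> Gamma r s c j \<and> b \<in> koszul_B r f (r - j)}"
  have "(\<lambda>x. x {..<r}) ` ?P \<subseteq> ideal_gen (a ` {..<s})"
    using wedge_Gamma_boundary_top_in_ideal[OF assms] by blast
  moreover have "a k \<in> ideal_gen ((\<lambda>x. x {..<r}) ` ?P)" if "k < s" for k
  proof (cases "r = 0")
    case True
    then show ?thesis
      using assms that by (simp add: ideal_gen_eq_span ring_module.span_zero)
  next
    case False
    then have "zeta r c k \<in> Gamma r s c 1" "koszul_d r f (ext_top r) \<in> koszul_B r f (r - 1)" "1 \<le> r"
      using zeta_in_Gamma[OF that] koszul_d_ext_top_in_koszul_B[of r f] by auto
    then have "wedge (zeta r c k) (koszul_d r f (ext_top r)) \<in> ?P"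
      by blast
    then show ?thesis
      unfolding ideal_gen_eq_span wedge_zeta_koszul_d_ext_top[OF assms that, symmetric]
      by (intro ring_module.span_base imageI)
  qed
  ultimately show ?thesis
    unfolding GammaB_top_def image_eval_ext_span ideal_gen_eq_span ring_module.span_eq by blast
qed

end
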